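(* Let $G$ be a number all of whose options are numbers, and let $H$ be any game with $L(H)\neq\emptyset$. Then every Left option $G^L\in L(G)$ is strictly dominated in $G\mathbin{:}H$, i.e. there is a Left option $K$ of $G\mathbin{:}H$ with $G^L<K$.
   Context: Games are short normal-play combinatorial games, written $G\cong\{L(G)\mid R(G)\}$ with $L(G)$, $R(G)$ the Left and Right options; $<,\le,=$ denote the usual order and equality of game values. The ordinal sum is defined recursively by $G\mathbin{:}H\cong\{L(G),\,G\mathbin{:}L(H)\mid R(G),\,G\mathbin{:}R(H)\}$ (moving in $H$ keeps $G$; moving in $G$ discards $H$). A number is a game $G$ with $G^L<G<G^R$ for all $G^L\in L(G)$, $G^R\in R(G)$ (short numbers have values in the dyadic rationals). *)

theory Defs
  imports Main
begin

datatype game = Game "game list" "game list"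

fun lopts :: "game \<Rightarrow> game list" where "lopts (Game l r) = l"
fun ropts :: "game \<Rightarrow> game list" where "ropts (Game l r) = r"

definition L :: "game \<Rightarrow> game set" where "L g = set (lopts g)"
definition R :: "game \<Rightarrow> game set" where "R g = set (ropts g)"

lemma size_opt: "x \<in> set xs \<Longrightarrow> size x < Suc (size_list size xs + size_list size ys)"
  "x \<in> set ys \<Longrightarrow> size x < Suc (size_list size xs + size_list size ys)"
  by (auto dest: size_list_estimation'[of _ _ _ size, OF _ le_refl])

function game_le :: "game \<Rightarrow> game \<Rightarrow> bool" where
  "game_le (Game gl gr) (Game hl hr) =
     ((\<forall>x\<in>set gl. \<not> game_le (Game hl hr) x) \<and> (\<forall>y\<in>set hr. \<not> game_le y (Game gl gr)))"
  by pat_completeness auto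
termination
  by (relation "measure (\<lambda>(a,b). size a + size b)") (auto dest: size_opt)

definition game_lt :: "game \<Rightarrow> game \<Rightarrow> bool" where
  "game_lt g h \<longleftrightarrow> game_le g h \<and> \<not> game_le h g"

primrec ordsum :: "game \<Rightarrow> game \<Rightarrow> game" where
  "ordsum g (Game hl hr) = Game (lopts g @ map (ordsum g) hl) (ropts g @ map (ordsum g) hr)"

definition is_number :: "game \<Rightarrow> bool" where
  "is_number g \<longleftrightarrow> (\<forall>x\<in>L g. game_lt x g) \<and> (\<forall>y\<in>R g. game_lt g y)"

end

theory Submission
  imports Defs
begin

text \<open>Take \<open>K = G:H\<^sup>L\<close> for any \<open>H\<^sup>L \<in> L(H)\<close>. Since \<open>G\<^sup>L\<close> is itself a Left option of \<open>G:X\<close>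
  for every \<open>X\<close>, no \<open>G:X\<close> lies below \<open>G\<^sup>L\<close>; this settles \<open>K \<le> G\<^sup>L\<close> and the Right options of \<open>K\<close>
  coming from \<open>H\<^sup>L\<close>. The remaining conditions for \<open>G\<^sup>L \<le> K\<close> come from \<open>G\<^sup>L\<close> and \<open>G\<close> being
  numbers: \<open>G\<^sup>L\<close> dominates its own Left options, and \<open>G\<^sup>L < G < G\<^sup>R\<close> rules out \<open>G\<^sup>R \<le> G\<^sup>L\<close>.\<close>

lemma game_le_iff:
  "game_le g h \<longleftrightarrow> (\<forall>x\<in>L g. \<not> game_le h x) \<and> (\<forall>y\<in>R h. \<not> game_le y g)"
  by (cases g; cases h) (simp add: L_def R_def)

lemma size_L_less: "x \<in> L g \<Longrightarrow> size x < size g"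
  by (cases g) (auto simp: L_def dest: size_opt)

lemma size_R_less: "x \<in> R g \<Longrightarrow> size x < size g"
  by (cases g) (auto simp: R_def dest: size_opt)

lemma game_le_refl: "game_le g g"
proof (induction g rule: measure_induct_rule[of size])
  case (less g)
  show ?case
  proof (subst game_le_iff, intro conjI ballI)
    fix x assume x: "x \<in> L g"
    have "game_le x x" using less size_L_less[OF x] by blast
    then show "\<not> game_le g x" using x by (subst game_le_iff) blast
  next
    fix y assume y: "y \<in> R g"
    have "game_le y y" using less size_R_less[OF y] by blast
    then show "\<not> game_le y g" using y by (subst game_le_iff) blast
  qed
qed

lemma game_le_trans: "game_le x y \<Longrightarrow> game_le y z \<Longrightarrow> game_le x z"
proof (induction "size x + size y + size z" arbitrary: x y z rule: less_induct)
  case less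
  show ?case
  proof (subst game_le_iff, intro conjI ballI notI)
    fix a assume a: "a \<in> L x" and "game_le z a"
    then have "game_le y a" using less(1)[of y z a] less(3) size_L_less[OF a] by simp
    then show False using less(2) a by (subst (asm) game_le_iff) blast
  next
    fix a assume a: "a \<in> R z" and "game_le a x"
    then have "game_le a y" using less(1)[of a x y] less(2) size_R_less[OF a] by simp
    then show False using less(3) a by (subst (asm) game_le_iff) blast
  qed
qed

lemma not_le_left_option: "x \<in> L g \<Longrightarrow> \<not> game_le g x"
  using game_le_refl by (subst game_le_iff) blast

lemma is_number_left_lt: "is_number g \<Longrightarrow> x \<in> L g \<Longrightarrow> game_lt x g"
  by (simp add: is_number_def)

lemma is_number_lt_right: "is_number g \<Longrightarrow> y \<in> R g \<Longrightarrow> game_lt g y"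
  by (simp add: is_number_def)

lemma L_ordsum: "L (ordsum g h) = L g \<union> ordsum g ` L h"
  by (cases h) (simp add: L_def)

lemma R_ordsum: "R (ordsum g h) = R g \<union> ordsum g ` R h"
  by (cases h) (simp add: R_def)

lemma not_ordsum_le_left_option: "x \<in> L g \<Longrightarrow> \<not> game_le (ordsum g h) x"
  by (rule not_le_left_option) (simp add: L_ordsum)

lemma left_option_le_ordsum:
  assumes "is_number g" and "is_number x" and "x \<in> L g"
  shows "game_le x (ordsum g h)"
proof (subst game_le_iff, intro conjI ballI notI)
  fix a assume "a \<in> L x" and "game_le (ordsum g h) a"
  moreover have "game_le a x" using \<open>is_number x\<close> \<open>a \<in> L x\<close> is_number_left_lt game_lt_def by blast
  ultimately show False using game_le_trans not_ordsum_le_left_option[OF \<open>x \<in> L g\<close>] by blast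
next
  fix b assume b: "b \<in> R (ordsum g h)" and "game_le b x"
  then consider "b \<in> R g" | y where "b = ordsum g y" by (auto simp: R_ordsum)
  then show False
  proof cases
    case 1
    have "game_le x g" using assms(1,3) is_number_left_lt game_lt_def by blast
    moreover have "\<not> game_le b g" using assms(1) 1 is_number_lt_right game_lt_def by blast
    ultimately show False using \<open>game_le b x\<close> game_le_trans by blast
  next
    case 2
    then show False using \<open>game_le b x\<close> not_ordsum_le_left_option[OF assms(3)] by blast
  qed
qed

lemma left_option_lt_ordsum:
  assumes "is_number g" and "is_number x" and "x \<in> L g"
  shows "game_lt x (ordsum g h)"
  using left_option_le_ordsum[OF assms] not_ordsum_le_left_option[OF assms(3)]
  by (simp add: game_lt_def)

theorem proposition2p6:
  fixes G H GL :: game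
  assumes "is_number G"
    and "\<forall>X \<in> L G \<union> R G. is_number X"
    and "L H \<noteq> {}"
    and "GL \<in> L G"
  shows "\<exists>K \<in> L (ordsum G H). game_lt GL K"
proof -
  obtain HL where "HL \<in> L H" using assms(3) by blast
  then have "ordsum G HL \<in> L (ordsum G H)" by (simp add: L_ordsum)
  moreover have "game_lt GL (ordsum G HL)"
    using left_option_lt_ordsum assms(1,2,4) by blast
  ultimately show ?thesis by blast
qed

end
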